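(* Let $A,B$ be finite-dimensional $K$-subspaces of $L$ with $K\subset A\cap B$. Suppose there exist $K$-subspaces $\overline{A},\overline{B}\subset L$ such that $$A=K\oplus\overline{A},\quad B=K\oplus\overline{B},\quad K\cap\big(\overline{A}+\overline{B}+\langle\overline{A}\,\overline{B}\rangle\big)=\{0\}.$$ Then $\dim_K\langle AB\rangle\geq\dim_KA+\dim_KB-1$.
   Context: $K$ is a commutative field and $L$ is a (possibly noncommutative) division ring containing $K$ in its center. For $S\subset L$, $\langle S\rangle$ denotes the $K$-subspace of $L$ spanned by $S$. For subsets $S_1,S_2$ of $L$, $S_1S_2=\{s_1s_2\mid s_1\in S_1,s_2\in S_2\}$ (product set). *)

theory Defs
  imports Complex_Main
begin

text \<open>The commutative field K is modelled as a type 'k of class field, embedded into the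
division ring 'L via a ring homomorphism phi whose image lies in the centre of 'L.\<close>

definition scl :: "('k::field \<Rightarrow> 'L::division_ring) \<Rightarrow> 'k \<Rightarrow> 'L \<Rightarrow> 'L" where
  "scl phi c x = phi c * x"

definition central_embedding :: "('k::field \<Rightarrow> 'L::division_ring) \<Rightarrow> bool" where
  "central_embedding phi \<longleftrightarrow>
     phi 1 = 1 \<and> (\<forall>a b. phi (a + b) = phi a + phi b) \<and> (\<forall>a b. phi (a * b) = phi a * phi b)
     \<and> (\<forall>c x. phi c * x = x * phi c)"

definition Ksubspace :: "('k::field \<Rightarrow> 'L::division_ring) \<Rightarrow> 'L set \<Rightarrow> bool" where
  "Ksubspace phi S = module.subspace (scl phi) S"

definition Kspan :: "('k::field \<Rightarrow> 'L::division_ring) \<Rightarrow> 'L set \<Rightarrow> 'L set" where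
  "Kspan phi S = module.span (scl phi) S"

definition Kdim :: "('k::field \<Rightarrow> 'L::division_ring) \<Rightarrow> 'L set \<Rightarrow> nat" where
  "Kdim phi S = vector_space.dim (scl phi) S"

definition Kfindim :: "('k::field \<Rightarrow> 'L::division_ring) \<Rightarrow> 'L set \<Rightarrow> bool" where
  "Kfindim phi S \<longleftrightarrow> (\<exists>F. finite F \<and> Kspan phi F = S)"

definition setsum :: "'L::plus set \<Rightarrow> 'L set \<Rightarrow> 'L set" where
  "setsum S T = {s + t | s t. s \<in> S \<and> t \<in> T}"

definition setprod :: "'L::times set \<Rightarrow> 'L set \<Rightarrow> 'L set" where
  "setprod S T = {s * t | s t. s \<in> S \<and> t \<in> T}"

end

theory Submission
  imports Defs
begin

text \<open>
  Proof of the linear Kneser-type inequality \<open>dim \<langle>AB\<rangle> \<ge> dim A + dim B - 1\<close> by Dyson's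
  \<open>e\<close>-transform, transported to subspaces of a division algebra \<open>L\<close> over a central field \<open>K\<close>.

  Put \<open>H = Abar + Bbar + \<langle>Abar Bbar\<rangle>\<close> and \<open>C = \<langle>AB\<rangle>\<close>.  A pair \<open>(A, B)\<close> of subspaces is called
  admissible if \<open>1 \<in> A \<inter> B\<close>, \<open>AB \<subseteq> C\<close>, \<open>(A \<inter> H) B \<subseteq> H\<close>, \<open>A (B \<inter> H) \<subseteq> H\<close> and
  \<open>A, B \<subseteq> K + H\<close>; as \<open>1 \<notin> H\<close>, every admissible pair satisfies \<open>dim A + dim B \<le> dim C + 1\<close>.
  If \<open>A \<inter> B \<inter> H = 0\<close> then \<open>A \<inter> B = K\<close> and Grassmann's inequality for \<open>A + B \<subseteq> C\<close> suffices.
  Otherwise pick \<open>0 \<noteq> e \<in> A \<inter> B \<inter> H\<close>: the transforms \<open>(A + Ae, {b \<in> B. eb \<in> B})\<close> and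
  \<open>({a \<in> A. ae \<in> A}, B + eB)\<close> are admissible and one of them is strictly larger in a bounded
  lexicographic order, which gives an induction.
\<close>

context vector_space
begin

text \<open>Inside a finitely spanned set every independent family is finite and no larger than the
  dimension.  This replaces the library facts that need a finite-dimensional ambient space.\<close>

lemma independent_card_le_dim_fd:
  assumes "T \<subseteq> span F" "finite F" "independent B" "B \<subseteq> T"
  shows "finite B \<and> card B \<le> dim T"
proof -
  obtain BT where BT: "BT \<subseteq> T" "independent BT" "T \<subseteq> span BT" "card BT = dim T"
    using basis_exists by blast
  have "finite BT"
    using independent_span_bound[OF assms(2) BT(2) order_trans[OF BT(1) assms(1)]] by (rule conjunct1)
  moreover have "B \<subseteq> span BT" using assms(4) BT(3) by (rule order_trans)
  ultimately have "finite B \<and> card B \<le> card BT" by (rule independent_span_bound[OF _ assms(3)])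
  then show ?thesis using BT(4) by simp
qed

lemma dim_subset_fd:
  assumes "T \<subseteq> span F" "finite F" "S \<subseteq> T"
  shows "dim S \<le> dim T"
proof -
  obtain BS where BS: "BS \<subseteq> S" "independent BS" "card BS = dim S"
    using basis_exists by metis
  have "card BS \<le> dim T"
    using independent_card_le_dim_fd[OF assms(1,2) BS(2) order_trans[OF BS(1) assms(3)]] by (rule conjunct2)
  then show ?thesis using BS(3) by simp
qed

lemma dim_psubset_fd:
  assumes "T \<subseteq> span F" "finite F" "subspace S" "S \<subset> T"
  shows "dim S < dim T"
proof -
  obtain BS where BS: "BS \<subseteq> S" "independent BS" "S \<subseteq> span BS" "card BS = dim S"
    using basis_exists by metis
  obtain t where t: "t \<in> T" "t \<notin> S" using assms(4) by blast
  have "span BS = S" using span_subspace[OF BS(1,3) assms(3)] .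
  then have "independent (insert t BS)" using independent_insertI[OF _ BS(2)] t(2) by simp
  moreover have "insert t BS \<subseteq> T" using BS(1) t(1) assms(4) by auto
  ultimately have "finite (insert t BS) \<and> card (insert t BS) \<le> dim T"
    by (rule independent_card_le_dim_fd[OF assms(1,2)])
  moreover have "t \<notin> BS" using BS(1) t(2) by auto
  ultimately show ?thesis using BS(4) by auto
qed

text \<open>A basis \<open>E\<close> of
  \<open>S + T\<close> is chosen inside \<open>S \<union> T\<close> extending a basis of \<open>S\<close>; then \<open>T\<close> is spanned by a basis of
  \<open>S \<inter> T\<close> together with \<open>E - S\<close>.\<close>

lemma dim_sums_Int_ge:
  assumes "subspace S" "subspace T" "S \<union> T \<subseteq> span F" "finite F"
  shows "dim S + dim T \<le> dim (setsum S T) + dim (S \<inter> T)"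
proof -
  obtain BS where BS: "BS \<subseteq> S" "independent BS" "card BS = dim S"
    using basis_exists by metis
  have "BS \<subseteq> S \<union> T" using BS(1) by blast
  then obtain E where E: "BS \<subseteq> E" "E \<subseteq> S \<union> T" "independent E" "S \<union> T \<subseteq> span E"
    using maximal_independent_subset_extend[OF _ BS(2)] by blast
  have finE: "finite E"
    using independent_card_le_dim_fd[OF assms(3,4) E(3,2)] by (rule conjunct1)
  have dim_sum: "dim (setsum S T) = card E"
  proof (rule dim_unique)
    show "E \<subseteq> setsum S T"
      using E(2) subspace_0[OF assms(1)] subspace_0[OF assms(2)] unfolding setsum_def by force
    show "setsum S T \<subseteq> span E"
      using E(4) unfolding setsum_def by (auto intro: span_add)
  qed (fact E(3), rule refl)
  have dim_ES: "dim S \<le> card (E \<inter> S)"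
    using card_mono[of "E \<inter> S" BS] finE BS E(1) by auto
  obtain B where B: "B \<subseteq> S \<inter> T" "independent B" "S \<inter> T \<subseteq> span B" "card B = dim (S \<inter> T)"
    using basis_exists by metis
  have finB: "finite B"
    using independent_card_le_dim_fd[OF assms(3,4) B(2)] B(1) by auto
  have "T \<subseteq> span (B \<union> (E - S))"
  proof
    fix t assume t: "t \<in> T"
    have "t \<in> span ((E \<inter> S) \<union> (E - S))" using E(4) t Int_Diff_Un[of E S] by auto
    then obtain c d where cd: "t = c + d" "c \<in> span (E \<inter> S)" "d \<in> span (E - S)"
      unfolding span_Un by auto
    have "c \<in> S" using cd(2) span_minimal[OF _ assms(1), of "E \<inter> S"] by auto
    moreover have "d \<in> T" using cd(3) span_minimal[OF _ assms(2), of "E - S"] E(2) by auto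
    moreover have "c = t - d" using cd(1) by simp
    ultimately have "c \<in> S \<inter> T" using subspace_diff[OF assms(2) t] by simp
    then have "c \<in> span (B \<union> (E - S))" using B(3) span_mono[of B "B \<union> (E - S)"] by blast
    moreover have "d \<in> span (B \<union> (E - S))" using cd(3) span_mono[of "E - S"] by auto
    ultimately show "t \<in> span (B \<union> (E - S))" using cd(1) span_add by simp
  qed
  then have "dim T \<le> card (B \<union> (E - S))" using dim_le_card finB finE by simp
  also have "\<dots> \<le> card B + card (E - S)" by (rule card_Un_le)
  finally show ?thesis using card_Int_Diff[OF finE, of S] dim_sum dim_ES B(4) by linarith
qed

lemma dim_image_inj:
  assumes "module_hom scale scale g" "inj g"
  shows "dim (g ` S) = dim S"
proof -
  interpret g: module_hom scale scale g by fact
  obtain B where B: "B \<subseteq> S" "independent B" "S \<subseteq> span B" "card B = dim S"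
    using basis_exists by blast
  have "independent (g ` B)"
    using g.independent_injective_image[OF B(2)] assms(2) by (meson inj_on_subset subset_UNIV)
  moreover have "g ` S \<subseteq> span (g ` B)" using B(3) g.span_image by blast
  moreover have "card (g ` B) = card B" using assms(2) by (simp add: card_image inj_on_subset)
  ultimately show ?thesis using dim_unique[OF image_mono[OF B(1)]] B(4) by simp
qed

end

locale division_algebra =
  fixes phi :: "'k::field \<Rightarrow> 'L::division_ring"
  assumes central: "central_embedding phi"
begin

lemma phi_one: "phi 1 = 1"
  and phi_add: "phi (a + b) = phi a + phi b"
  and phi_mult: "phi (a * b) = phi a * phi b"
  and phi_central: "phi c * x = x * phi c"
  using central unfolding central_embedding_def by blast+

sublocale vs: vector_space "scl phi"
proof
  fix a b :: 'k and x y :: 'L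
  show "scl phi a (x + y) = scl phi a x + scl phi a y" by (simp add: scl_def distrib_left)
  show "scl phi (a + b) x = scl phi a x + scl phi b x" by (simp add: scl_def phi_add distrib_right)
  show "scl phi a (scl phi b x) = scl phi (a * b) x" by (simp add: scl_def phi_mult mult.assoc)
  show "scl phi 1 x = x" by (simp add: scl_def phi_one)
qed

text \<open>Left and right multiplications are \<open>K\<close>-linear since \<open>K\<close> is central.\<close>

lemma mult_left_hom: "module_hom (scl phi) (scl phi) (\<lambda>x. e * x)"
  unfolding module_hom_iff using vs.module_axioms
  by (simp add: distrib_left scl_def) (metis mult.assoc phi_central)

lemma mult_right_hom: "module_hom (scl phi) (scl phi) (\<lambda>x. x * e)"
  unfolding module_hom_iff using vs.module_axioms by (simp add: distrib_right scl_def mult.assoc)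

lemma phi_in_subspace: "vs.subspace S \<Longrightarrow> 1 \<in> S \<Longrightarrow> phi c \<in> S"
  using vs.subspace_scale[of S 1 c] by (simp add: scl_def)

lemma span_setprod_span: "vs.span (setprod (vs.span X) (vs.span Y)) \<subseteq> vs.span (setprod X Y)"
proof -
  have left: "x * y \<in> vs.span (setprod X Y)" if "x \<in> X" "y \<in> vs.span Y" for x y
  proof -
    interpret l: module_hom "scl phi" "scl phi" "\<lambda>y. x * y" by (rule mult_left_hom)
    have "(\<lambda>y. x * y) ` Y \<subseteq> setprod X Y" using that(1) unfolding setprod_def by blast
    then have "(\<lambda>y. x * y) ` vs.span Y \<subseteq> vs.span (setprod X Y)"
      unfolding l.span_image[symmetric] by (rule vs.span_mono)
    then show ?thesis using that(2) by blast
  qed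
  have both: "x * y \<in> vs.span (setprod X Y)" if "x \<in> vs.span X" "y \<in> vs.span Y" for x y
  proof -
    interpret r: module_hom "scl phi" "scl phi" "\<lambda>x. x * y" by (rule mult_right_hom)
    have "(\<lambda>x. x * y) ` X \<subseteq> vs.span (setprod X Y)" using left that(2) by blast
    then have "(\<lambda>x. x * y) ` vs.span X \<subseteq> vs.span (setprod X Y)"
      unfolding r.span_image[symmetric] by (rule vs.span_minimal) simp
    then show ?thesis using that(1) by blast
  qed
  show ?thesis by (rule vs.span_minimal) (use both in \<open>auto simp: setprod_def\<close>)
qed

lemma finite_setprod:
  assumes "finite X" "finite Y"
  shows "finite (setprod X Y)"
proof -
  have "setprod X Y = (\<lambda>(x, y). x * y) ` (X \<times> Y)" unfolding setprod_def by auto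
  then show ?thesis using assms by simp
qed

lemma fin_dim_span_setprod:
  assumes "Kfindim phi A" "Kfindim phi B"
  obtains F where "finite F" "vs.span (setprod A B) \<subseteq> vs.span F"
proof -
  obtain FA FB where F: "finite FA" "vs.span FA = A" "finite FB" "vs.span FB = B"
    using assms unfolding Kfindim_def Kspan_def by metis
  have "vs.span (setprod A B) \<subseteq> vs.span (setprod FA FB)"
    using span_setprod_span[of FA FB] F(2,4) by simp
  then show ?thesis using that finite_setprod[OF F(1,3)] by blast
qed

text \<open>Admissible pairs \<open>(A, B)\<close> relative to an ambient space \<open>C\<close> and a subspace \<open>H\<close> (not
  containing \<open>1\<close> in applications): this is the invariant preserved by the \<open>e\<close>-transforms.\<close>

definition admissible :: "'L set \<Rightarrow> 'L set \<Rightarrow> 'L set \<Rightarrow> 'L set \<Rightarrow> bool" where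
  "admissible C H A B \<longleftrightarrow>
     vs.subspace A \<and> vs.subspace B \<and> 1 \<in> A \<and> 1 \<in> B \<and> setprod A B \<subseteq> C
     \<and> setprod (A \<inter> H) B \<subseteq> H \<and> setprod A (B \<inter> H) \<subseteq> H
     \<and> A \<subseteq> setsum (range phi) H \<and> B \<subseteq> setsum (range phi) H"

lemma in_K_plus_iff: "x \<in> setsum (range phi) H \<longleftrightarrow> (\<exists>c. x - phi c \<in> H)"
proof
  assume "x \<in> setsum (range phi) H"
  then obtain c h where "x = phi c + h" "h \<in> H" unfolding setsum_def by blast
  then show "\<exists>c. x - phi c \<in> H" by (metis add_diff_cancel_left')
next
  assume "\<exists>c. x - phi c \<in> H"
  then obtain c where "x - phi c \<in> H" by blast
  moreover have "x = phi c + (x - phi c)" by simp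
  ultimately show "x \<in> setsum (range phi) H" unfolding setsum_def by blast
qed

lemma setprod_subset_iff: "setprod A B \<subseteq> C \<longleftrightarrow> (\<forall>a\<in>A. \<forall>b\<in>B. a * b \<in> C)"
  unfolding setprod_def by blast

lemma admissible_iff:
  "admissible C H A B \<longleftrightarrow>
     vs.subspace A \<and> vs.subspace B \<and> 1 \<in> A \<and> 1 \<in> B \<and> (\<forall>a\<in>A. \<forall>b\<in>B. a * b \<in> C)
     \<and> (\<forall>a\<in>A \<inter> H. \<forall>b\<in>B. a * b \<in> H) \<and> (\<forall>a\<in>A. \<forall>b\<in>B \<inter> H. a * b \<in> H)
     \<and> (\<forall>a\<in>A. \<exists>c. a - phi c \<in> H) \<and> (\<forall>b\<in>B. \<exists>c. b - phi c \<in> H)"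
  unfolding admissible_def setprod_subset_iff by (simp add: subset_iff in_K_plus_iff Ball_def)

lemma admissibleI:
  assumes "vs.subspace A" "vs.subspace B" "1 \<in> A" "1 \<in> B"
    and "\<And>a b. a \<in> A \<Longrightarrow> b \<in> B \<Longrightarrow> a * b \<in> C"
    and "\<And>a b. a \<in> A \<Longrightarrow> a \<in> H \<Longrightarrow> b \<in> B \<Longrightarrow> a * b \<in> H"
    and "\<And>a b. a \<in> A \<Longrightarrow> b \<in> B \<Longrightarrow> b \<in> H \<Longrightarrow> a * b \<in> H"
    and "\<And>a. a \<in> A \<Longrightarrow> \<exists>c. a - phi c \<in> H"
    and "\<And>b. b \<in> B \<Longrightarrow> \<exists>c. b - phi c \<in> H"
  shows "admissible C H A B"
  unfolding admissible_iff using assms by simp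

lemma admissibleD:
  assumes "admissible C H A B"
  shows "vs.subspace A" "vs.subspace B" "1 \<in> A" "1 \<in> B"
    and "\<And>a b. a \<in> A \<Longrightarrow> b \<in> B \<Longrightarrow> a * b \<in> C"
    and "\<And>a b. a \<in> A \<Longrightarrow> a \<in> H \<Longrightarrow> b \<in> B \<Longrightarrow> a * b \<in> H"
    and "\<And>a b. a \<in> A \<Longrightarrow> b \<in> B \<Longrightarrow> b \<in> H \<Longrightarrow> a * b \<in> H"
    and "\<And>a. a \<in> A \<Longrightarrow> \<exists>c. a - phi c \<in> H"
    and "\<And>b. b \<in> B \<Longrightarrow> \<exists>c. b - phi c \<in> H"
  using assms unfolding admissible_iff by simp_all

lemma admissible_subset: "admissible C H A B \<Longrightarrow> A \<subseteq> C \<and> B \<subseteq> C"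
  using admissibleD(3-5)[of C H A B] by (metis mult_1_left mult_1_right subsetI)

text \<open>Consequently their dimensions are bounded by \<open>dim C\<close>, which makes the induction below terminate.\<close>

lemma admissible_dim_le:
  assumes "admissible C H A B" "C \<subseteq> vs.span F" "finite F"
  shows "vs.dim A \<le> vs.dim C" "vs.dim B \<le> vs.dim C"
  using admissible_subset[OF assms(1)] vs.dim_subset_fd[OF assms(2,3)] by blast+

text \<open>Base case: if \<open>A \<inter> B \<inter> H = 0\<close>, then \<open>A \<inter> B = K\<close> (every element of \<open>A \<inter> B\<close> differs from a
  scalar by an element of \<open>A \<inter> B \<inter> H\<close>), and Grassmann's inequality applied to \<open>A + B \<subseteq> C\<close>
  gives the bound.\<close>

lemma admissible_dim_bound_base:
  assumes adm: "admissible C H A B" and C: "vs.subspace C" "C \<subseteq> vs.span F" "finite F"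
    and trivial: "A \<inter> B \<inter> H \<subseteq> {0}"
  shows "vs.dim A + vs.dim B \<le> vs.dim C + 1"
proof -
  note a = admissibleD[OF adm]
  have "A \<inter> B \<subseteq> vs.span {1}"
  proof
    fix x assume x: "x \<in> A \<inter> B"
    then obtain c where c: "x - phi c \<in> H" using a(8) by blast
    have "phi c \<in> A" "phi c \<in> B" using phi_in_subspace a(1-4) by blast+
    then have "x - phi c \<in> A \<inter> B" using x vs.subspace_diff a(1,2) by blast
    then have "x = scl phi c 1" using c trivial by (auto simp: scl_def)
    then show "x \<in> vs.span {1}" by (simp add: vs.span_base vs.span_scale)
  qed
  then have dim_Int: "vs.dim (A \<inter> B) \<le> 1" using vs.dim_le_card[of "A \<inter> B" "{1}"] by simp
  have "setsum A B \<subseteq> C"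
  proof
    fix z assume "z \<in> setsum A B"
    then obtain x y where z: "z = x + y" "x \<in> A" "y \<in> B" unfolding setsum_def by auto
    have "x * 1 \<in> C" "1 * y \<in> C" using a(3-5) z(2,3) by blast+
    then have "x + y \<in> C" using vs.subspace_add[OF C(1)] by simp
    then show "z \<in> C" using z(1) by simp
  qed
  then have "vs.dim (setsum A B) \<le> vs.dim C" by (rule vs.dim_subset_fd[OF C(2,3)])
  moreover have "vs.dim A + vs.dim B \<le> vs.dim (setsum A B) + vs.dim (A \<inter> B)"
    using vs.dim_sums_Int_ge[OF a(1,2)] admissible_subset[OF adm] C(2,3) by blast
  ultimately show ?thesis using dim_Int by linarith
qed

text \<open>The key point is that \<open>Ae\<close> and \<open>eB\<close> lie
  in \<open>H\<close>, so the \<open>H\<close>-conditions survive.\<close>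

lemma admissible_transform_left:
  assumes adm: "admissible C H A B" and C: "vs.subspace C" and H: "vs.subspace H"
    and e: "e \<in> A" "e \<in> B" "e \<in> H"
  shows "admissible C H (setsum A ((\<lambda>x. x * e) ` A)) (B \<inter> {b. e * b \<in> B})"
proof -
  note a = admissibleD[OF adm]
  interpret r: module_hom "scl phi" "scl phi" "\<lambda>x. x * e" by (rule mult_right_hom)
  interpret l: module_hom "scl phi" "scl phi" "\<lambda>x. e * x" by (rule mult_left_hom)
  let ?A1 = "setsum A ((\<lambda>x. x * e) ` A)" and ?B1 = "B \<inter> {b. e * b \<in> B}"
  have A1: "\<exists>x y. z = x + y * e \<and> x \<in> A \<and> y \<in> A" if "z \<in> ?A1" for z
    using that unfolding setsum_def by blast
  have ye_H: "y * e \<in> H" if "y \<in> A" for y using a(7) that e by blast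
  have eb_H: "e * b \<in> H" if "b \<in> B" for b using a(6) that e by blast
  have expand: "(x + y * e) * b = x * b + y * (e * b)" for x y b
    by (simp add: distrib_right mult.assoc)
  show ?thesis
  proof (rule admissibleI)
    show "vs.subspace ?A1"
      unfolding setsum_def by (rule vs.subspace_sums[OF a(1) r.subspace_image[OF a(1)]])
    show "vs.subspace ?B1" by (intro vs.subspace_inter a(2) l.subspace_linear_preimage)
    show "1 \<in> ?A1" using a(3) vs.subspace_0[OF a(1)] unfolding setsum_def by force
    show "1 \<in> ?B1" using a(4) e(2) by simp
  next
    fix z b assume "z \<in> ?A1" "b \<in> ?B1"
    then obtain x y where "z = x + y * e" "x \<in> A" "y \<in> A" "b \<in> B" "e * b \<in> B"
      using A1 by blast
    then show "z * b \<in> C" using expand a(5) vs.subspace_add[OF C] by simp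
  next
    fix z b assume "z \<in> ?A1" "z \<in> H" "b \<in> ?B1"
    then obtain x y where xy: "z = x + y * e" "x \<in> A" "y \<in> A" and b: "b \<in> B" "e * b \<in> B"
      using A1 by blast
    have "x = z - y * e" using xy(1) by simp
    then have "x \<in> H" using vs.subspace_diff[OF H \<open>z \<in> H\<close> ye_H[OF xy(3)]] by simp
    then have "x * b \<in> H" "y * (e * b) \<in> H" using a(6,7) xy(2,3) b eb_H by blast+
    then show "z * b \<in> H" using xy(1) expand vs.subspace_add[OF H] by simp
  next
    fix z b assume "z \<in> ?A1" "b \<in> ?B1" "b \<in> H"
    then obtain x y where xy: "z = x + y * e" "x \<in> A" "y \<in> A" and b: "b \<in> B" "e * b \<in> B"
      using A1 by blast
    have "x * b \<in> H" "y * (e * b) \<in> H" using a(7) xy(2,3) b \<open>b \<in> H\<close> eb_H by blast+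
    then show "z * b \<in> H" using xy(1) expand vs.subspace_add[OF H] by simp
  next
    fix z assume "z \<in> ?A1"
    then obtain x y where xy: "z = x + y * e" "x \<in> A" "y \<in> A" using A1 by blast
    obtain c where "x - phi c \<in> H" using a(8) xy(2) by blast
    then have "(x - phi c) + y * e \<in> H" using vs.subspace_add[OF H] ye_H[OF xy(3)] by blast
    then show "\<exists>c. z - phi c \<in> H" using xy(1) by (metis add_diff_eq diff_add_eq)
  next
    fix b assume "b \<in> ?B1"
    then show "\<exists>c. b - phi c \<in> H" using a(9) by blast
  qed
qed

lemma admissible_transform_right:
  assumes adm: "admissible C H A B" and C: "vs.subspace C" and H: "vs.subspace H"
    and e: "e \<in> A" "e \<in> B" "e \<in> H"
  shows "admissible C H (A \<inter> {a. a * e \<in> A}) (setsum B ((\<lambda>x. e * x) ` B))"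
proof -
  note a = admissibleD[OF adm]
  interpret r: module_hom "scl phi" "scl phi" "\<lambda>x. x * e" by (rule mult_right_hom)
  interpret l: module_hom "scl phi" "scl phi" "\<lambda>x. e * x" by (rule mult_left_hom)
  let ?A2 = "A \<inter> {a. a * e \<in> A}" and ?B2 = "setsum B ((\<lambda>x. e * x) ` B)"
  have B2: "\<exists>x y. z = x + e * y \<and> x \<in> B \<and> y \<in> B" if "z \<in> ?B2" for z
    using that unfolding setsum_def by blast
  have ae_H: "a * e \<in> H" if "a \<in> A" for a using a(7) that e by blast
  have ey_H: "e * y \<in> H" if "y \<in> B" for y using a(6) that e by blast
  have expand: "a * (x + e * y) = a * x + (a * e) * y" for a x y
    by (simp add: distrib_left mult.assoc)
  show ?thesis
  proof (rule admissibleI)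
    show "vs.subspace ?A2" by (intro vs.subspace_inter a(1) r.subspace_linear_preimage)
    show "vs.subspace ?B2"
      unfolding setsum_def by (rule vs.subspace_sums[OF a(2) l.subspace_image[OF a(2)]])
    show "1 \<in> ?A2" using a(3) e(1) by simp
    show "1 \<in> ?B2" using a(4) vs.subspace_0[OF a(2)] unfolding setsum_def by force
  next
    fix a' z assume "a' \<in> ?A2" "z \<in> ?B2"
    then obtain x y where "z = x + e * y" "x \<in> B" "y \<in> B" "a' \<in> A" "a' * e \<in> A"
      using B2 by blast
    then show "a' * z \<in> C" using expand a(5) vs.subspace_add[OF C] by simp
  next
    fix a' z assume "a' \<in> ?A2" "a' \<in> H" "z \<in> ?B2"
    then obtain x y where xy: "z = x + e * y" "x \<in> B" "y \<in> B" and a': "a' \<in> A" "a' * e \<in> A"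
      using B2 by blast
    have "a' * e \<in> H" using a(6) a'(1) \<open>a' \<in> H\<close> e(2) by blast
    then have "a' * x \<in> H" "(a' * e) * y \<in> H" using a(6) xy(2,3) a' \<open>a' \<in> H\<close> by blast+
    then show "a' * z \<in> H" using xy(1) expand vs.subspace_add[OF H] by simp
  next
    fix a' z assume "a' \<in> ?A2" "z \<in> ?B2" "z \<in> H"
    then obtain x y where xy: "z = x + e * y" "x \<in> B" "y \<in> B" and a': "a' \<in> A" "a' * e \<in> A"
      using B2 by blast
    have "x = z - e * y" using xy(1) by simp
    then have "x \<in> H" using vs.subspace_diff[OF H \<open>z \<in> H\<close> ey_H[OF xy(3)]] by simp
    then have "a' * x \<in> H" "(a' * e) * y \<in> H" using a(6,7) xy(2,3) a' ae_H by blast+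
    then show "a' * z \<in> H" using xy(1) expand vs.subspace_add[OF H] by simp
  next
    fix a' assume "a' \<in> ?A2"
    then show "\<exists>c. a' - phi c \<in> H" using a(8) by blast
  next
    fix z assume "z \<in> ?B2"
    then obtain x y where xy: "z = x + e * y" "x \<in> B" "y \<in> B" using B2 by blast
    obtain c where "x - phi c \<in> H" using a(9) xy(2) by blast
    then have "(x - phi c) + e * y \<in> H" using vs.subspace_add[OF H] ey_H[OF xy(3)] by blast
    then show "\<exists>c. z - phi c \<in> H" using xy(1) by (metis add_diff_eq diff_add_eq)
  qed
qed

lemma dim_mult_right: "e \<noteq> 0 \<Longrightarrow> vs.dim ((\<lambda>x. x * e) ` S) = vs.dim S"
  by (rule vs.dim_image_inj[OF mult_right_hom]) (simp add: inj_on_def)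

lemma dim_mult_left: "e \<noteq> 0 \<Longrightarrow> vs.dim ((\<lambda>x. e * x) ` S) = vs.dim S"
  by (rule vs.dim_image_inj[OF mult_left_hom]) (simp add: inj_on_def)

text \<open>Grassmann's inequality and \<open>{a. ae \<in> A} \<cong> A \<inter> Ae\<close>, \<open>{b. eb \<in> B} \<cong> B \<inter> eB\<close>
  show that the two transforms together have dimension sum at least \<open>2 (dim A + dim B)\<close>.  So one
  of them increases \<open>dim A + dim B\<close>, or the first keeps it and strictly enlarges \<open>A\<close>: indeed
  \<open>1 \<notin> Ae\<close>, so \<open>A \<inter> Ae\<close> is a proper subspace of \<open>A\<close>.\<close>

lemma admissible_transform_step:
  assumes adm: "admissible C H A B" and C: "vs.subspace C" "C \<subseteq> vs.span F" "finite F"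
    and H: "vs.subspace H" "1 \<notin> H" and e: "e \<in> A" "e \<in> B" "e \<in> H" "e \<noteq> 0"
  obtains A' B' where "admissible C H A' B'"
    "vs.dim A + vs.dim B < vs.dim A' + vs.dim B'
     \<or> vs.dim A + vs.dim B = vs.dim A' + vs.dim B' \<and> vs.dim A < vs.dim A'"
proof -
  note a = admissibleD[OF adm]
  define Ae where "Ae = (\<lambda>x. x * e) ` A"
  define Be where "Be = (\<lambda>x. e * x) ` B"
  define A1 where "A1 = setsum A Ae"
  define B1 where "B1 = B \<inter> {b. e * b \<in> B}"
  define A2 where "A2 = A \<inter> {a. a * e \<in> A}"
  define B2 where "B2 = setsum B Be"
  have adm1: "admissible C H A1 B1" unfolding A1_def B1_def Ae_def
    by (rule admissible_transform_left[OF adm C(1) H(1) e(1-3)])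
  have adm2: "admissible C H A2 B2" unfolding A2_def B2_def Be_def
    by (rule admissible_transform_right[OF adm C(1) H(1) e(1-3)])
  have "A \<subseteq> C" "B \<subseteq> C" using admissible_subset[OF adm] by auto
  moreover have "Ae \<subseteq> C" "Be \<subseteq> C" unfolding Ae_def Be_def using a(5) e(1,2) by blast+
  ultimately have AF: "A \<union> Ae \<subseteq> vs.span F" and BF: "B \<union> Be \<subseteq> vs.span F" using C(2) by blast+
  have sAe: "vs.subspace Ae" unfolding Ae_def
    by (rule module_hom.subspace_image[OF mult_right_hom a(1)])
  have sBe: "vs.subspace Be" unfolding Be_def
    by (rule module_hom.subspace_image[OF mult_left_hom a(2)])
  have "(\<lambda>x. x * e) ` A2 = A \<inter> Ae" unfolding A2_def Ae_def by auto
  then have dimA2: "vs.dim A2 = vs.dim (A \<inter> Ae)" using dim_mult_right[OF e(4), of A2] by simp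
  have "(\<lambda>x. e * x) ` B1 = B \<inter> Be" unfolding B1_def Be_def by auto
  then have dimB1: "vs.dim B1 = vs.dim (B \<inter> Be)" using dim_mult_left[OF e(4), of B1] by simp
  have gA: "2 * vs.dim A \<le> vs.dim A1 + vs.dim A2"
    using vs.dim_sums_Int_ge[OF a(1) sAe AF C(3)] dim_mult_right[OF e(4)] dimA2
    unfolding A1_def Ae_def by simp
  have gB: "2 * vs.dim B \<le> vs.dim B2 + vs.dim B1"
    using vs.dim_sums_Int_ge[OF a(2) sBe BF C(3)] dim_mult_left[OF e(4)] dimB1
    unfolding B2_def Be_def by simp
  \<comment> \<open>\<open>1 \<notin> Ae\<close>, since otherwise \<open>1 = x e \<in> H\<close>; so \<open>A \<inter> Ae\<close> is a proper subspace of \<open>A\<close>\<close>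
  have "1 \<notin> Ae"
  proof
    assume "1 \<in> Ae"
    then obtain x where "x \<in> A" "1 = x * e" unfolding Ae_def by blast
    then show False using a(7) e(2,3) H(2) by metis
  qed
  then have "A \<inter> Ae \<subset> A" using a(3) by blast
  then have "vs.dim (A \<inter> Ae) < vs.dim A"
    using vs.dim_psubset_fd[OF _ C(3) vs.subspace_inter[OF a(1) sAe]] AF by blast
  then consider "vs.dim A + vs.dim B < vs.dim A1 + vs.dim B1"
    | "vs.dim A + vs.dim B < vs.dim A2 + vs.dim B2"
    | "vs.dim A + vs.dim B = vs.dim A1 + vs.dim B1" "vs.dim A < vs.dim A1"
    using gA gB dimA2 by linarith
  then show ?thesis using that adm1 adm2 by metis
qed

text \<open>The bound for all admissible pairs, by well-founded induction: the transforms increase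
  \<open>(dim A + dim B, dim A)\<close> lexicographically, and both dimensions are bounded by \<open>dim C\<close>.\<close>

lemma admissible_dim_bound:
  assumes C: "vs.subspace C" "C \<subseteq> vs.span F" "finite F" and H: "vs.subspace H" "1 \<notin> H"
    and adm: "admissible C H A B"
  shows "vs.dim A + vs.dim B \<le> vs.dim C + 1"
  using adm
proof (induction "(A, B)" arbitrary: A B rule: wf_induct_rule[OF wf_measures[of
      "[\<lambda>(A, B). 2 * vs.dim C - (vs.dim A + vs.dim B), \<lambda>(A, B). vs.dim C - vs.dim A]"],
      case_names larger])
  case (larger A B)
  show ?case
  proof (cases "A \<inter> B \<inter> H \<subseteq> {0}")
    case True
    then show ?thesis by (rule admissible_dim_bound_base[OF larger.prems C])
  next
    case False
    then obtain e where "e \<in> A" "e \<in> B" "e \<in> H" "e \<noteq> 0" by blast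
    then obtain A' B' where adm': "admissible C H A' B'" and
      grows: "vs.dim A + vs.dim B < vs.dim A' + vs.dim B'
               \<or> vs.dim A + vs.dim B = vs.dim A' + vs.dim B' \<and> vs.dim A < vs.dim A'"
      using admissible_transform_step[OF larger.prems C H] by blast
    have "vs.dim A' \<le> vs.dim C" "vs.dim B' \<le> vs.dim C"
      using admissible_dim_le[OF adm' C(2,3)] by auto
    then have "((A', B'), (A, B)) \<in> measures
      [\<lambda>(A, B). 2 * vs.dim C - (vs.dim A + vs.dim B), \<lambda>(A, B). vs.dim C - vs.dim A]"
      using grows by auto
    then have "vs.dim A' + vs.dim B' \<le> vs.dim C + 1" using larger.hyps adm' by blast
    then show ?thesis using grows by linarith
  qed
qed

text \<open>The hypotheses of the theorem produce an admissible pair: with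
  \<open>H = Abar + Bbar + \<langle>Abar Bbar\<rangle>\<close> and \<open>K \<inter> H = 0\<close>, the \<open>H\<close>-part of \<open>A\<close> is exactly \<open>Abar\<close>
  (and likewise for \<open>B\<close>), which makes the absorption conditions hold.\<close>

lemma admissible_of_decomposition:
  assumes sA: "vs.subspace A" "vs.subspace B" and sAbar: "vs.subspace Abar" "vs.subspace Bbar"
    and decA: "A = setsum (range phi) Abar" and decB: "B = setsum (range phi) Bbar"
    and H: "H = setsum (setsum Abar Bbar) (vs.span (setprod Abar Bbar))"
    and KH: "range phi \<inter> H = {0}"
  shows "admissible (vs.span (setprod A B)) H A B"
proof -
  have zero: "0 \<in> Abar" "0 \<in> Bbar" "0 \<in> vs.span (setprod Abar Bbar)"
    using vs.subspace_0 sAbar vs.span_zero by auto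
  have sH: "vs.subspace H"
    unfolding H setsum_def by (intro vs.subspace_sums sAbar vs.subspace_span)
  have Abar_H: "x \<in> H" if "x \<in> Abar" for x
  proof -
    have "(x + 0) + 0 \<in> H" unfolding H setsum_def using that zero by blast
    then show ?thesis by simp
  qed
  have Bbar_H: "y \<in> H" if "y \<in> Bbar" for y
  proof -
    have "(0 + y) + 0 \<in> H" unfolding H setsum_def using that zero by blast
    then show ?thesis by simp
  qed
  have prod_H: "x * y \<in> H" if "x \<in> Abar" "y \<in> Bbar" for x y
  proof -
    have "x * y \<in> vs.span (setprod Abar Bbar)"
      using that by (intro vs.span_base) (auto simp: setprod_def)
    then have "(0 + 0) + x * y \<in> H" unfolding H setsum_def using zero by blast
    then show ?thesis by simp
  qed
  have partsA: "\<exists>c x. a = phi c + x \<and> x \<in> Abar" if "a \<in> A" for a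
    using that unfolding decA setsum_def by blast
  have partsB: "\<exists>c y. b = phi c + y \<and> y \<in> Bbar" if "b \<in> B" for b
    using that unfolding decB setsum_def by blast
  have A_H: "a \<in> Abar" if a: "a \<in> A" "a \<in> H" for a
  proof -
    obtain c x where x: "a = phi c + x" "x \<in> Abar" using partsA[OF a(1)] by blast
    then have "phi c \<in> H" using vs.subspace_diff[OF sH a(2) Abar_H[OF x(2)]] by simp
    then have "phi c = 0" using KH by blast
    then show ?thesis using x by simp
  qed
  have B_H: "b \<in> Bbar" if b: "b \<in> B" "b \<in> H" for b
  proof -
    obtain c y where y: "b = phi c + y" "y \<in> Bbar" using partsB[OF b(1)] by blast
    then have "phi c \<in> H" using vs.subspace_diff[OF sH b(2) Bbar_H[OF y(2)]] by simp
    then have "phi c = 0" using KH by blast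
    then show ?thesis using y by simp
  qed
  show ?thesis
  proof (rule admissibleI[OF sA])
    show "1 \<in> A" "1 \<in> B" using zero phi_one unfolding decA decB setsum_def by force+
  next
    fix a b assume "a \<in> A" "b \<in> B"
    then show "a * b \<in> vs.span (setprod A B)" by (intro vs.span_base) (auto simp: setprod_def)
  next
    fix a b assume a: "a \<in> A" "a \<in> H" and b: "b \<in> B"
    obtain d y where y: "b = phi d + y" "y \<in> Bbar" using partsB[OF b] by blast
    have "a * b = scl phi d a + a * y" using y(1) by (simp add: distrib_left scl_def phi_central)
    moreover have "scl phi d a \<in> H" using vs.subspace_scale[OF sH a(2)] .
    moreover have "a * y \<in> H" using prod_H[OF A_H[OF a] y(2)] .
    ultimately show "a * b \<in> H" using vs.subspace_add[OF sH] by simp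
  next
    fix a b assume a: "a \<in> A" and b: "b \<in> B" "b \<in> H"
    obtain d x where x: "a = phi d + x" "x \<in> Abar" using partsA[OF a] by blast
    have "a * b = scl phi d b + x * b" using x(1) by (simp add: distrib_right scl_def)
    moreover have "scl phi d b \<in> H" using vs.subspace_scale[OF sH b(2)] .
    moreover have "x * b \<in> H" using prod_H[OF x(2) B_H[OF b]] .
    ultimately show "a * b \<in> H" using vs.subspace_add[OF sH] by simp
  next
    fix a assume "a \<in> A"
    then obtain c x where "a = phi c + x" "x \<in> Abar" using partsA by blast
    then have "a - phi c \<in> H" using Abar_H by simp
    then show "\<exists>c. a - phi c \<in> H" ..
  next
    fix b assume "b \<in> B"
    then obtain c y where "b = phi c + y" "y \<in> Bbar" using partsB by blast
    then have "b - phi c \<in> H" using Bbar_H by simp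
    then show "\<exists>c. b - phi c \<in> H" ..
  qed
qed

end

theorem mainTheorem9:
  fixes phi :: "'k::field \<Rightarrow> 'L::division_ring"
    and A B Abar Bbar :: "'L set"
  assumes emb: "central_embedding phi"
    and subA: "Ksubspace phi A" and subB: "Ksubspace phi B"
    and finA: "Kfindim phi A" and finB: "Kfindim phi B"
    and KAB: "range phi \<subseteq> A \<inter> B"
    and subAbar: "Ksubspace phi Abar" and subBbar: "Ksubspace phi Bbar"
    and dsA: "A = setsum (range phi) Abar" "range phi \<inter> Abar = {0}"
    and dsB: "B = setsum (range phi) Bbar" "range phi \<inter> Bbar = {0}"
    and cond: "range phi \<inter> setsum (setsum Abar Bbar) (Kspan phi (setprod Abar Bbar)) = {0}"
  shows "int (Kdim phi (Kspan phi (setprod A B))) \<ge> int (Kdim phi A) + int (Kdim phi B) - 1"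
proof -
  interpret division_algebra phi by (rule division_algebra.intro[OF emb])
  define C where "C = vs.span (setprod A B)"
  define H where "H = setsum (setsum Abar Bbar) (vs.span (setprod Abar Bbar))"
  obtain F where F: "finite F" "C \<subseteq> vs.span F"
    using fin_dim_span_setprod[OF finA finB] unfolding C_def by blast
  have KH: "range phi \<inter> H = {0}" using cond unfolding H_def Kspan_def .
  have sH: "vs.subspace H"
    using subAbar subBbar unfolding H_def setsum_def Ksubspace_def
    by (intro vs.subspace_sums vs.subspace_span)
  have "1 \<notin> H" using KH phi_one by (metis IntI one_neq_zero rangeI singletonD)
  moreover have "admissible C H A B"
    using admissible_of_decomposition[OF _ _ _ _ dsA(1) dsB(1) H_def KH] subA subB subAbar subBbar
    unfolding C_def Ksubspace_def by blast
  ultimately have "vs.dim A + vs.dim B \<le> vs.dim C + 1"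
    using admissible_dim_bound[OF _ F(2,1) sH] unfolding C_def by blast
  then show ?thesis unfolding Kdim_def C_def Kspan_def by linarith
qed

end
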